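(* Let $\mathcal{C}$ be a path category and let $\mathcal{D}$ be a class of display maps with weak (respectively strong) homotopy $\Pi$-types in $\mathcal{C}$. Let $\mathcal{I}$ be the class of isomorphisms in $\mathcal{C}$. Then $\mathcal{D} \cup \mathcal{I}$ is also a class of display maps with weak (respectively strong) homotopy $\Pi$-types.
   Context: A path category is a category with two classes of maps, fibrations and weak equivalences, such that: fibrations are closed under composition and contain the isomorphisms; pullbacks of fibrations along arbitrary maps exist and are fibrations; there is a terminal object and every map to it is a fibration; isomorphisms are weak equivalences; weak equivalences satisfy 2-out-of-6; every object $X$ has a path object, a factorisation of the diagonal as a weak equivalence $X \to PX$ followed by a fibration $(s,t): PX \to X\times X$; pullbacks of trivial fibrations are trivial fibrations; every trivial fibration has a section. For a fibration $p: Y \to A$ one similarly factors $Y \to Y\times_A Y$ to get a fibrewise path object $P_A Y$, and two maps $m, m': D \to Y$ over $A$ are fibrewise homotopic ($m \simeq_A m'$) if there is $H: D \to P_A Y$ with $(s,t)H = (m,m')$. Homotopy $\Pi$-types: given fibrations $g: C \to B$ and $f: B \to A$, a weak homotopy $\Pi$-type $\Pi_f(g)$ is a fibration $\pi: \Pi \to A$ with a map $\varepsilon: \Pi\times_A B \to C$ satisfying $g\varepsilon = $ the projection to $B$, such that for every map $h: D \to A$ and every $m: D\times_A B \to C$ with $gm$ equal to the projection to $B$, there is $k: D \to \Pi$ with $\pi k = h$ and $\varepsilon\circ(k\times_A B) \simeq_B m$; it is strong if moreover for any $k, k': D \to \Pi$ over $A$ with $\varepsilon(k\times_A B) \simeq_B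 \varepsilon(k'\times_A B)$ we have $k \simeq_A k'$. A class $\mathcal{D}$ of fibrations is a class of display maps with weak (strong) homotopy $\Pi$-types if: every identity map lies in $\mathcal{D}$; the pullback of a map in $\mathcal{D}$ along any map can be found in $\mathcal{D}$ (some pullback lies in $\mathcal{D}$); and for all composable $d: X \to I$, $e: I \to J$ in $\mathcal{D}$ a weak (strong) homotopy $\Pi$-type $\Pi_e(d)$ exists and can be found in $\mathcal{D}$. *)

theory Defs
  imports Main
begin

record ('o, 'm) cat =
  obj :: "'o set"
  arr :: "'m set"
  dm  :: "'m \<Rightarrow> 'o"
  cd  :: "'m \<Rightarrow> 'o"
  cmp :: "'m \<Rightarrow> 'm \<Rightarrow> 'm"   (* cmp C g f = g \<circ> f *)
  idt :: "'o \<Rightarrow> 'm"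

definition hom :: "('o, 'm) cat \<Rightarrow> 'o \<Rightarrow> 'o \<Rightarrow> 'm set" where
  "hom C X Y = {f \<in> arr C. dm C f = X \<and> cd C f = Y}"

definition is_category :: "('o, 'm) cat \<Rightarrow> bool" where
  "is_category C \<longleftrightarrow>
     (\<forall>f \<in> arr C. dm C f \<in> obj C \<and> cd C f \<in> obj C) \<and>
     (\<forall>X \<in> obj C. idt C X \<in> hom C X X) \<and>
     (\<forall>f \<in> arr C. \<forall>g \<in> arr C. cd C f = dm C g \<longrightarrow>
         cmp C g f \<in> hom C (dm C f) (cd C g)) \<and>
     (\<forall>f \<in> arr C. cmp C f (idt C (dm C f)) = f \<and> cmp C (idt C (cd C f)) f = f) \<and>
     (\<forall>f \<in> arr C. \<forall>g \<in> arr C. \<forall>h \<in> arr C. cd C f = dm C g \<longrightarrow> cd C g = dm C h \<longrightarrow>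
         cmp C h (cmp C g f) = cmp C (cmp C h g) f)"

definition isos :: "('o, 'm) cat \<Rightarrow> 'm set" where
  "isos C = {f \<in> arr C. \<exists>g \<in> hom C (cd C f) (dm C f).
               cmp C g f = idt C (dm C f) \<and> cmp C f g = idt C (cd C f)}"

text \<open>A pullback square: p1 : P \<rightarrow> X, p2 : P \<rightarrow> Y of f : X \<rightarrow> Z and g : Y \<rightarrow> Z
  (so p2 is the pullback of f along g).\<close>
definition is_pullback :: "('o, 'm) cat \<Rightarrow> 'm \<Rightarrow> 'm \<Rightarrow> 'o \<Rightarrow> 'm \<Rightarrow> 'm \<Rightarrow> bool" where
  "is_pullback C f g P p1 p2 \<longleftrightarrow>
     f \<in> arr C \<and> g \<in> arr C \<and> cd C f = cd C g \<and>
     p1 \<in> hom C P (dm C f) \<and> p2 \<in> hom C P (dm C g) \<and>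
     cmp C f p1 = cmp C g p2 \<and>
     (\<forall>W a b. a \<in> hom C W (dm C f) \<longrightarrow> b \<in> hom C W (dm C g) \<longrightarrow> cmp C f a = cmp C g b \<longrightarrow>
        (\<exists>!u. u \<in> hom C W P \<and> cmp C p1 u = a \<and> cmp C p2 u = b))"

definition is_product :: "('o, 'm) cat \<Rightarrow> 'o \<Rightarrow> 'o \<Rightarrow> 'o \<Rightarrow> 'm \<Rightarrow> 'm \<Rightarrow> bool" where
  "is_product C X Y P p1 p2 \<longleftrightarrow>
     p1 \<in> hom C P X \<and> p2 \<in> hom C P Y \<and>
     (\<forall>W a b. a \<in> hom C W X \<longrightarrow> b \<in> hom C W Y \<longrightarrow>
        (\<exists>!u. u \<in> hom C W P \<and> cmp C p1 u = a \<and> cmp C p2 u = b))"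

definition is_terminal :: "('o, 'm) cat \<Rightarrow> 'o \<Rightarrow> bool" where
  "is_terminal C T \<longleftrightarrow> T \<in> obj C \<and> (\<forall>X \<in> obj C. \<exists>!u. u \<in> hom C X T)"

definition two_out_of_six :: "('o, 'm) cat \<Rightarrow> 'm set \<Rightarrow> bool" where
  "two_out_of_six C We \<longleftrightarrow>
     (\<forall>f \<in> arr C. \<forall>g \<in> arr C. \<forall>h \<in> arr C. cd C f = dm C g \<longrightarrow> cd C g = dm C h \<longrightarrow>
        cmp C g f \<in> We \<longrightarrow> cmp C h g \<in> We \<longrightarrow>
        f \<in> We \<and> g \<in> We \<and> h \<in> We \<and> cmp C h (cmp C g f) \<in> We)"

definition path_category :: "('o, 'm) cat \<Rightarrow> 'm set \<Rightarrow> 'm set \<Rightarrow> bool" where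
  "path_category C Fib We \<longleftrightarrow>
     is_category C \<and> Fib \<subseteq> arr C \<and> We \<subseteq> arr C \<and>
     \<comment> \<open>fibrations closed under composition and contain the isomorphisms\<close>
     (\<forall>f \<in> Fib. \<forall>g \<in> Fib. cd C f = dm C g \<longrightarrow> cmp C g f \<in> Fib) \<and>
     isos C \<subseteq> Fib \<and>
     \<comment> \<open>pullbacks of fibrations along arbitrary maps exist and are fibrations\<close>
     (\<forall>p \<in> Fib. \<forall>f \<in> arr C. cd C f = cd C p \<longrightarrow> (\<exists>P p1 p2. is_pullback C p f P p1 p2)) \<and>
     (\<forall>p \<in> Fib. \<forall>f P p1 p2. is_pullback C p f P p1 p2 \<longrightarrow> p2 \<in> Fib) \<and>
     \<comment> \<open>terminal object, every map to it is a fibration\<close>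
     (\<exists>T. is_terminal C T \<and> (\<forall>X \<in> obj C. \<forall>u \<in> hom C X T. u \<in> Fib)) \<and>
     \<comment> \<open>isomorphisms are weak equivalences; 2-out-of-6\<close>
     isos C \<subseteq> We \<and>
     two_out_of_six C We \<and>
     \<comment> \<open>path objects\<close>
     (\<forall>X \<in> obj C. \<exists>Q q1 q2 P w q.
        is_product C X X Q q1 q2 \<and> w \<in> hom C X P \<and> w \<in> We \<and>
        q \<in> hom C P Q \<and> q \<in> Fib \<and>
        cmp C q1 (cmp C q w) = idt C X \<and> cmp C q2 (cmp C q w) = idt C X) \<and>
     \<comment> \<open>pullbacks of trivial fibrations are trivial fibrations\<close>
     (\<forall>p \<in> Fib \<inter> We. \<forall>f P p1 p2. is_pullback C p f P p1 p2 \<longrightarrow> p2 \<in> We) \<and>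
     \<comment> \<open>every trivial fibration has a section\<close>
     (\<forall>p \<in> Fib \<inter> We. \<exists>s \<in> hom C (cd C p) (dm C p). cmp C p s = idt C (cd C p))"

text \<open>For a fibration p : Y \<rightarrow> A: a factorisation of the diagonal Y \<rightarrow> Y \<times>_A Y
  as a weak equivalence w : Y \<rightarrow> P followed by a fibration q : P \<rightarrow> Y \<times>_A Y = Q.\<close>
definition fw_path_obj ::
  "('o, 'm) cat \<Rightarrow> 'm set \<Rightarrow> 'm set \<Rightarrow> 'm \<Rightarrow> 'o \<Rightarrow> 'm \<Rightarrow> 'm \<Rightarrow> 'o \<Rightarrow> 'm \<Rightarrow> 'm \<Rightarrow> bool" where
  "fw_path_obj C Fib We p Q r1 r2 P w q \<longleftrightarrow>
     is_pullback C p p Q r1 r2 \<and>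
     w \<in> hom C (dm C p) P \<and> w \<in> We \<and> q \<in> hom C P Q \<and> q \<in> Fib \<and>
     cmp C r1 (cmp C q w) = idt C (dm C p) \<and> cmp C r2 (cmp C q w) = idt C (dm C p)"

definition fw_htpy :: "('o, 'm) cat \<Rightarrow> 'm set \<Rightarrow> 'm set \<Rightarrow> 'm \<Rightarrow> 'm \<Rightarrow> 'm \<Rightarrow> bool" where
  "fw_htpy C Fib We p m m' \<longleftrightarrow>
     p \<in> Fib \<and> m \<in> arr C \<and> m' \<in> arr C \<and> dm C m = dm C m' \<and>
     cd C m = dm C p \<and> cd C m' = dm C p \<and> cmp C p m = cmp C p m' \<and>
     (\<exists>Q r1 r2 P w q H. fw_path_obj C Fib We p Q r1 r2 P w q \<and>
        H \<in> hom C (dm C m) P \<and>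
        cmp C r1 (cmp C q H) = m \<and> cmp C r2 (cmp C q H) = m')"

text \<open>Data for \<Pi>_f(g), f : B \<rightarrow> A, g : C \<rightarrow> B: pi : Pi \<rightarrow> A, a pullback
  (PB, e1 : PB \<rightarrow> Pi, e2 : PB \<rightarrow> B) = Pi \<times>_A B, and eps : PB \<rightarrow> C.\<close>
definition weak_pi_type ::
  "('o, 'm) cat \<Rightarrow> 'm set \<Rightarrow> 'm set \<Rightarrow> 'm \<Rightarrow> 'm \<Rightarrow> 'o \<Rightarrow> 'm \<Rightarrow> 'o \<Rightarrow> 'm \<Rightarrow> 'm \<Rightarrow> 'm \<Rightarrow> bool" where
  "weak_pi_type C Fib We f g Pi pi PB e1 e2 eps \<longleftrightarrow>
     f \<in> Fib \<and> g \<in> Fib \<and> cd C g = dm C f \<and>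
     pi \<in> hom C Pi (cd C f) \<and> pi \<in> Fib \<and>
     is_pullback C pi f PB e1 e2 \<and>
     eps \<in> hom C PB (dm C g) \<and> cmp C g eps = e2 \<and>
     (\<forall>D h DB q1 q2 m. h \<in> hom C D (cd C f) \<longrightarrow> is_pullback C h f DB q1 q2 \<longrightarrow>
        m \<in> hom C DB (dm C g) \<longrightarrow> cmp C g m = q2 \<longrightarrow>
        (\<exists>k \<in> hom C D Pi. cmp C pi k = h \<and>
           (\<exists>u \<in> hom C DB PB. cmp C e1 u = cmp C k q1 \<and> cmp C e2 u = q2 \<and>
              fw_htpy C Fib We g (cmp C eps u) m)))"

definition strong_pi_type ::
  "('o, 'm) cat \<Rightarrow> 'm set \<Rightarrow> 'm set \<Rightarrow> 'm \<Rightarrow> 'm \<Rightarrow> 'o \<Rightarrow> 'm \<Rightarrow> 'o \<Rightarrow> 'm \<Rightarrow> 'm \<Rightarrow> 'm \<Rightarrow> bool" where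
  "strong_pi_type C Fib We f g Pi pi PB e1 e2 eps \<longleftrightarrow>
     weak_pi_type C Fib We f g Pi pi PB e1 e2 eps \<and>
     (\<forall>D k k' DB q1 q2 u u'. k \<in> hom C D Pi \<longrightarrow> k' \<in> hom C D Pi \<longrightarrow>
        cmp C pi k = cmp C pi k' \<longrightarrow> is_pullback C (cmp C pi k) f DB q1 q2 \<longrightarrow>
        u \<in> hom C DB PB \<longrightarrow> cmp C e1 u = cmp C k q1 \<longrightarrow> cmp C e2 u = q2 \<longrightarrow>
        u' \<in> hom C DB PB \<longrightarrow> cmp C e1 u' = cmp C k' q1 \<longrightarrow> cmp C e2 u' = q2 \<longrightarrow>
        fw_htpy C Fib We g (cmp C eps u) (cmp C eps u') \<longrightarrow>
        fw_htpy C Fib We pi k k')"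

definition pi_type ::
  "bool \<Rightarrow> ('o, 'm) cat \<Rightarrow> 'm set \<Rightarrow> 'm set \<Rightarrow> 'm \<Rightarrow> 'm \<Rightarrow> 'o \<Rightarrow> 'm \<Rightarrow> 'o \<Rightarrow> 'm \<Rightarrow> 'm \<Rightarrow> 'm \<Rightarrow> bool" where
  "pi_type strong C Fib We f g Pi pi PB e1 e2 eps \<longleftrightarrow>
     (if strong then strong_pi_type C Fib We f g Pi pi PB e1 e2 eps
      else weak_pi_type C Fib We f g Pi pi PB e1 e2 eps)"

definition display_class :: "bool \<Rightarrow> ('o, 'm) cat \<Rightarrow> 'm set \<Rightarrow> 'm set \<Rightarrow> 'm set \<Rightarrow> bool" where
  "display_class strong C Fib We Dm \<longleftrightarrow>
     Dm \<subseteq> Fib \<and>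
     (\<forall>X \<in> obj C. idt C X \<in> Dm) \<and>
     (\<forall>d \<in> Dm. \<forall>h \<in> arr C. cd C h = cd C d \<longrightarrow>
        (\<exists>P p1 p2. is_pullback C d h P p1 p2 \<and> p2 \<in> Dm)) \<and>
     (\<forall>d \<in> Dm. \<forall>e \<in> Dm. cd C d = dm C e \<longrightarrow>
        (\<exists>Pi pi PB e1 e2 eps. pi_type strong C Fib We e d Pi pi PB e1 e2 eps \<and> pi \<in> Dm))"

end

(*
  Pulling an isomorphism back along h, the leg over h can be taken to be the identity on the
  domain of h, and identities are display maps. For the Pi-types there are two new cases.
  If d is an isomorphism, Pi_e(d) is the identity on the codomain of e, with evaluation the
  inverse of d. If e is an isomorphism, Pi_e(d) is the pullback p2 of d along the inverse of e:
  its other leg p1 is an isomorphism and serves as evaluation, and p2 = e d p1, so homotopies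
  over d are transported to homotopies over p2 along the isomorphisms p1 and e.
  Reflexivity of fibrewise homotopy needs a fibrewise path object, which the axioms only give
  for objects; for an isomorphism the identities form one, and for a display map d one is
  extracted from the Pi-type of d along an identity.
*)

theory Submission
  imports Defs
begin

definition inverse_arrows :: "('o, 'm) cat \<Rightarrow> 'm \<Rightarrow> 'm \<Rightarrow> bool" where
  "inverse_arrows C f g \<longleftrightarrow> f \<in> arr C \<and> g \<in> arr C \<and> dm C g = cd C f \<and> cd C g = dm C f \<and>
     cmp C g f = idt C (dm C f) \<and> cmp C f g = idt C (cd C f)"

definition has_fw_path_obj :: "('o, 'm) cat \<Rightarrow> 'm set \<Rightarrow> 'm set \<Rightarrow> 'm \<Rightarrow> bool" where
  "has_fw_path_obj C Fib We p \<longleftrightarrow> (\<exists>Q r1 r2 P w q. fw_path_obj C Fib We p Q r1 r2 P w q)"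

lemma isosI: "inverse_arrows C f g \<Longrightarrow> f \<in> isos C"
  unfolding isos_def inverse_arrows_def hom_def by blast

lemma isosE:
  assumes "f \<in> isos C"
  obtains g where "inverse_arrows C f g"
  using assms unfolding isos_def inverse_arrows_def hom_def by blast

lemma inverse_arrows_sym: "inverse_arrows C f g \<Longrightarrow> inverse_arrows C g f"
  unfolding inverse_arrows_def by auto

lemma inverse_arrowsD:
  assumes "inverse_arrows C f g"
  shows "f \<in> arr C" "g \<in> arr C" "dm C g = cd C f" "cd C g = dm C f"
    "cmp C g f = idt C (dm C f)" "cmp C f g = idt C (cd C f)"
  using assms unfolding inverse_arrows_def by auto

lemma pullbackD:
  assumes "is_pullback C f g P p1 p2"
  shows "f \<in> arr C" "g \<in> arr C" "cd C f = cd C g"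
    "p1 \<in> arr C" "dm C p1 = P" "cd C p1 = dm C f"
    "p2 \<in> arr C" "dm C p2 = P" "cd C p2 = dm C g" "cmp C f p1 = cmp C g p2"
  using assms unfolding is_pullback_def hom_def by auto

lemma pullback_universal:
  assumes "is_pullback C f g P p1 p2" "a \<in> hom C W (dm C f)" "b \<in> hom C W (dm C g)"
    "cmp C f a = cmp C g b"
  shows "\<exists>!u. u \<in> hom C W P \<and> cmp C p1 u = a \<and> cmp C p2 u = b"
  using assms unfolding is_pullback_def by blast

lemma pullback_sym:
  assumes "is_pullback C f g P p1 p2"
  shows "is_pullback C g f P p2 p1"
proof -
  have swap: "(u \<in> hom C W P \<and> cmp C p2 u = a \<and> cmp C p1 u = b) \<longleftrightarrow>
      (u \<in> hom C W P \<and> cmp C p1 u = b \<and> cmp C p2 u = a)" for u W a b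
    by blast
  show ?thesis
    using assms unfolding is_pullback_def swap by auto
qed

lemma pi_type_if_strong_pi_type:
  "strong_pi_type C Fib We f g Pi pi PB e1 e2 eps \<Longrightarrow> pi_type b C Fib We f g Pi pi PB e1 e2 eps"
  unfolding pi_type_def strong_pi_type_def by simp

lemma weak_pi_type_if_pi_type:
  "pi_type b C Fib We f g Pi pi PB e1 e2 eps \<Longrightarrow> weak_pi_type C Fib We f g Pi pi PB e1 e2 eps"
  unfolding pi_type_def strong_pi_type_def by (cases b) simp_all

locale category =
  fixes C :: "('o, 'm) cat"
  assumes is_category: "is_category C"
begin

lemma dm_obj [simp]: "f \<in> arr C \<Longrightarrow> dm C f \<in> obj C"
  and cd_obj [simp]: "f \<in> arr C \<Longrightarrow> cd C f \<in> obj C"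
  and idt_arr [simp]: "X \<in> obj C \<Longrightarrow> idt C X \<in> arr C"
  and idt_dm [simp]: "X \<in> obj C \<Longrightarrow> dm C (idt C X) = X"
  and idt_cd [simp]: "X \<in> obj C \<Longrightarrow> cd C (idt C X) = X"
  using is_category unfolding is_category_def hom_def by blast+

lemma cmp_arr [simp]: "f \<in> arr C \<Longrightarrow> g \<in> arr C \<Longrightarrow> cd C f = dm C g \<Longrightarrow> cmp C g f \<in> arr C"
  and cmp_dm [simp]: "f \<in> arr C \<Longrightarrow> g \<in> arr C \<Longrightarrow> cd C f = dm C g \<Longrightarrow> dm C (cmp C g f) = dm C f"
  and cmp_cd [simp]: "f \<in> arr C \<Longrightarrow> g \<in> arr C \<Longrightarrow> cd C f = dm C g \<Longrightarrow> cd C (cmp C g f) = cd C g"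
  using is_category unfolding is_category_def hom_def by blast+

lemma idt_left [simp]: "f \<in> arr C \<Longrightarrow> cd C f = X \<Longrightarrow> cmp C (idt C X) f = f"
  and idt_right [simp]: "f \<in> arr C \<Longrightarrow> dm C f = X \<Longrightarrow> cmp C f (idt C X) = f"
  using is_category unfolding is_category_def by blast+

lemma cmp_assoc [simp]:
  "f \<in> arr C \<Longrightarrow> g \<in> arr C \<Longrightarrow> h \<in> arr C \<Longrightarrow> cd C f = dm C g \<Longrightarrow> cd C g = dm C h \<Longrightarrow>
    cmp C (cmp C h g) f = cmp C h (cmp C g f)"
  using is_category unfolding is_category_def by metis

lemma inverse_arrows_cancel:
  assumes "inverse_arrows C f g"
  shows inverse_arrows_cancel_left: "x \<in> arr C \<Longrightarrow> cd C x = dm C f \<Longrightarrow> cmp C g (cmp C f x) = x"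
    and inverse_arrows_cancel_right: "y \<in> arr C \<Longrightarrow> cd C y = cd C f \<Longrightarrow> cmp C f (cmp C g y) = y"
  using inverse_arrowsD[OF assms] cmp_assoc idt_left by metis+

lemma inverse_arrows_idt: "X \<in> obj C \<Longrightarrow> inverse_arrows C (idt C X) (idt C X)"
  unfolding inverse_arrows_def by simp

lemma idt_isos: "X \<in> obj C \<Longrightarrow> idt C X \<in> isos C"
  using inverse_arrows_idt by (rule isosI)

lemma pullback_of_iso:
  assumes iso: "inverse_arrows C f f'" and p: "p \<in> arr C" "cd C p = cd C f"
  shows "is_pullback C f p (dm C p) (cmp C f' p) (idt C (dm C p))"
proof -
  note f = inverse_arrowsD[OF iso]
  have "\<exists>!u. u \<in> hom C W (dm C p) \<and> cmp C (cmp C f' p) u = a \<and> cmp C (idt C (dm C p)) u = b"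
    if a: "a \<in> hom C W (dm C f)" and b: "b \<in> hom C W (dm C p)" and ab: "cmp C f a = cmp C p b"
    for W a b
  proof (rule ex1I[of _ b])
    have "cmp C (cmp C f' p) b = cmp C f' (cmp C f a)"
      using ab b f p by (simp add: hom_def)
    also have "\<dots> = a"
      using a inverse_arrows_cancel_left[OF iso] by (simp add: hom_def)
    finally show "b \<in> hom C W (dm C p) \<and> cmp C (cmp C f' p) b = a \<and> cmp C (idt C (dm C p)) b = b"
      using b by (simp add: hom_def)
  qed (use p in \<open>auto simp: hom_def\<close>)
  then show ?thesis
    unfolding is_pullback_def using f p inverse_arrows_cancel_right[OF iso] by (simp add: hom_def)
qed

lemma pullback_iso_cmp:
  assumes pb: "is_pullback C f g P p1 p2" and iso: "inverse_arrows C e e'" and fe: "cd C f = dm C e"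
  shows "is_pullback C (cmp C e f) (cmp C e g) P p1 p2"
proof -
  note p = pullbackD[OF pb] and e = inverse_arrowsD[OF iso]
  have dms: "dm C (cmp C e f) = dm C f" "dm C (cmp C e g) = dm C g"
    using p e fe by simp_all
  have "\<exists>!u. u \<in> hom C W P \<and> cmp C p1 u = a \<and> cmp C p2 u = b"
    if a: "a \<in> hom C W (dm C f)" and b: "b \<in> hom C W (dm C g)"
      and ab: "cmp C (cmp C e f) a = cmp C (cmp C e g) b" for W a b
  proof (rule pullback_universal[OF pb a b])
    have fa: "cmp C f a \<in> arr C" "cd C (cmp C f a) = dm C e"
      and gb: "cmp C g b \<in> arr C" "cd C (cmp C g b) = dm C e"
      using a b p fe by (auto simp: hom_def)
    have "cmp C e (cmp C f a) = cmp C e (cmp C g b)"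
      using ab a b p e fe by (simp add: hom_def)
    then show "cmp C f a = cmp C g b"
      using inverse_arrows_cancel_left[OF iso fa] inverse_arrows_cancel_left[OF iso gb] by metis
  qed
  moreover have "cmp C (cmp C e f) p1 = cmp C (cmp C e g) p2"
    using p e fe by simp
  ultimately show ?thesis
    unfolding is_pullback_def dms using p e fe by (simp add: hom_def)
qed

lemma pullback_cmp_iso:
  assumes pb: "is_pullback C f g P p1 p2" and iso: "inverse_arrows C a a'" and af: "cd C a = dm C f"
  shows "is_pullback C (cmp C f a) g P (cmp C a' p1) p2"
proof -
  note p = pullbackD[OF pb] and a = inverse_arrowsD[OF iso]
  have "\<exists>!u. u \<in> hom C W P \<and> cmp C (cmp C a' p1) u = x \<and> cmp C p2 u = y"
    if x: "x \<in> hom C W (dm C a)" and y: "y \<in> hom C W (dm C g)"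
      and xy: "cmp C (cmp C f a) x = cmp C g y" for W x y
  proof -
    have "cmp C a x \<in> hom C W (dm C f)" "cmp C f (cmp C a x) = cmp C g y"
      using x xy p a af by (auto simp: hom_def)
    then have unique: "\<exists>!u. u \<in> hom C W P \<and> cmp C p1 u = cmp C a x \<and> cmp C p2 u = y"
      using pullback_universal[OF pb _ y] by blast
    have "cmp C (cmp C a' p1) u = x \<longleftrightarrow> cmp C p1 u = cmp C a x" if u: "u \<in> hom C W P" for u
    proof -
      have p1u: "cmp C p1 u \<in> arr C" "cd C (cmp C p1 u) = cd C a"
        using u p af by (auto simp: hom_def)
      have "cmp C (cmp C a' p1) u = cmp C a' (cmp C p1 u)"
        using u p a af by (simp add: hom_def)
      then show ?thesis
        using inverse_arrows_cancel_left[OF iso] inverse_arrows_cancel_right[OF iso p1u] x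
        by (auto simp: hom_def)
    qed
    then show ?thesis
      using unique by (metis (no_types, lifting))
  qed
  moreover have "cmp C (cmp C f a) (cmp C a' p1) = cmp C g p2"
    using p a af inverse_arrows_cancel_right[OF iso, of p1] by simp
  ultimately show ?thesis
    unfolding is_pullback_def using p a af by (simp add: hom_def)
qed

lemma pullback_leg_iso:
  assumes pb: "is_pullback C d g P p1 p2" and g_iso: "g \<in> isos C"
  shows "p1 \<in> isos C"
proof -
  obtain g' where iso: "inverse_arrows C g g'"
    using g_iso by (rule isosE)
  note p = pullbackD[OF pb] and g = inverse_arrowsD[OF iso]
  have "idt C (dm C d) \<in> hom C (dm C d) (dm C d)" "cmp C g' d \<in> hom C (dm C d) (dm C g)"
    using p g by (simp_all add: hom_def)
  moreover have "cmp C d (idt C (dm C d)) = cmp C g (cmp C g' d)"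
    using p inverse_arrows_cancel_right[OF iso, of d] by simp
  ultimately obtain u where u: "u \<in> hom C (dm C d) P" "cmp C p1 u = idt C (dm C d)" "cmp C p2 u = cmp C g' d"
    using pullback_universal[OF pb] by blast
  have p1_u_p1: "cmp C p1 (cmp C u p1) = p1"
  proof -
    have "cmp C p1 (cmp C u p1) = cmp C (cmp C p1 u) p1"
      using u(1) p by (simp add: hom_def)
    also have "\<dots> = p1"
      using p by (simp only: u(2)) simp
    finally show ?thesis .
  qed
  have p2_u_p1: "cmp C p2 (cmp C u p1) = p2"
  proof -
    have "cmp C p2 (cmp C u p1) = cmp C (cmp C p2 u) p1"
      using u(1) p by (simp add: hom_def)
    also have "\<dots> = cmp C g' (cmp C d p1)"
      using p g by (simp only: u(3)) simp
    also have "\<dots> = p2"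
      using inverse_arrows_cancel_left[OF iso] p by simp
    finally show ?thesis .
  qed
  have "cmp C u p1 \<in> hom C P P \<and> cmp C p1 (cmp C u p1) = p1 \<and> cmp C p2 (cmp C u p1) = p2"
    using p1_u_p1 p2_u_p1 u(1) p by (auto simp: hom_def)
  moreover have "idt C P \<in> hom C P P \<and> cmp C p1 (idt C P) = p1 \<and> cmp C p2 (idt C P) = p2"
    using p by (auto simp: hom_def)
  moreover have "\<exists>!v. v \<in> hom C P P \<and> cmp C p1 v = p1 \<and> cmp C p2 v = p2"
    using pullback_universal[OF pb, of p1 P p2] p by (simp add: hom_def)
  ultimately have "cmp C u p1 = idt C P"
    by blast
  then have "inverse_arrows C p1 u"
    using u p unfolding inverse_arrows_def by (simp add: hom_def)
  then show ?thesis
    by (rule isosI)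
qed

lemma fw_path_objD:
  assumes "fw_path_obj C Fib We p Q r1 r2 P w q"
  shows "is_pullback C p p Q r1 r2"
    "w \<in> arr C" "dm C w = dm C p" "cd C w = P" "w \<in> We"
    "q \<in> arr C" "dm C q = P" "cd C q = Q" "q \<in> Fib"
    "cmp C r1 (cmp C q w) = idt C (dm C p)" "cmp C r2 (cmp C q w) = idt C (dm C p)"
  using assms unfolding fw_path_obj_def hom_def by auto

lemma fw_htpyI:
  assumes p: "p \<in> Fib" and fp: "fw_path_obj C Fib We p Q r1 r2 P w q"
    and H: "H \<in> arr C" "cd C H = P"
  shows "fw_htpy C Fib We p (cmp C r1 (cmp C q H)) (cmp C r2 (cmp C q H))"
proof -
  note f = fw_path_objD[OF fp] and r = pullbackD[OF fw_path_objD(1)[OF fp]]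
  have "cmp C p (cmp C r1 (cmp C q H)) = cmp C p (cmp C r2 (cmp C q H))"
    using f r H by (simp flip: cmp_assoc)
  moreover have "cmp C r1 (cmp C q H) \<in> arr C" "cmp C r2 (cmp C q H) \<in> arr C"
    "dm C (cmp C r1 (cmp C q H)) = dm C H" "dm C (cmp C r2 (cmp C q H)) = dm C H"
    "cd C (cmp C r1 (cmp C q H)) = dm C p" "cd C (cmp C r2 (cmp C q H)) = dm C p"
    using f r H by simp_all
  moreover have "H \<in> hom C (dm C H) P"
    using H by (simp add: hom_def)
  ultimately show ?thesis
    unfolding fw_htpy_def using p fp by metis
qed

lemma fw_htpyE:
  assumes "fw_htpy C Fib We p m m'"
  obtains Q r1 r2 P w q H where "p \<in> Fib" "fw_path_obj C Fib We p Q r1 r2 P w q"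
    "H \<in> arr C" "dm C H = dm C m" "cd C H = P"
    "m = cmp C r1 (cmp C q H)" "m' = cmp C r2 (cmp C q H)"
  using assms unfolding fw_htpy_def hom_def by auto

lemma fw_htpy_refl:
  assumes p: "p \<in> Fib" "has_fw_path_obj C Fib We p" and m: "m \<in> arr C" "cd C m = dm C p"
  shows "fw_htpy C Fib We p m m"
proof -
  obtain Q r1 r2 P w q where fp: "fw_path_obj C Fib We p Q r1 r2 P w q"
    using p(2) unfolding has_fw_path_obj_def by blast
  note f = fw_path_objD[OF fp] and r = pullbackD[OF f(1)]
  have "fw_htpy C Fib We p (cmp C r1 (cmp C q (cmp C w m))) (cmp C r2 (cmp C q (cmp C w m)))"
    using fw_htpyI[OF p(1) fp] f m by simp
  moreover have "cmp C r1 (cmp C q (cmp C w m)) = cmp C (cmp C r1 (cmp C q w)) m"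
    "cmp C r2 (cmp C q (cmp C w m)) = cmp C (cmp C r2 (cmp C q w)) m"
    using f(2-9) r m by simp_all
  ultimately show ?thesis
    using f m by simp
qed

lemma fw_htpy_cmp_right:
  assumes h: "fw_htpy C Fib We p m m'" and x: "x \<in> arr C" "cd C x = dm C m"
  shows "fw_htpy C Fib We p (cmp C m x) (cmp C m' x)"
proof -
  obtain Q r1 r2 P w q H where p: "p \<in> Fib" and fp: "fw_path_obj C Fib We p Q r1 r2 P w q"
    and H: "H \<in> arr C" "dm C H = dm C m" "cd C H = P"
    and ends: "m = cmp C r1 (cmp C q H)" "m' = cmp C r2 (cmp C q H)"
    by (rule fw_htpyE[OF h])
  note f = fw_path_objD[OF fp] and r = pullbackD[OF f(1)]
  have "fw_htpy C Fib We p (cmp C r1 (cmp C q (cmp C H x))) (cmp C r2 (cmp C q (cmp C H x)))"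
    using fw_htpyI[OF p fp] H x by simp
  moreover have "cmp C m x = cmp C r1 (cmp C q (cmp C H x))" "cmp C m' x = cmp C r2 (cmp C q (cmp C H x))"
    unfolding ends using f r H x by simp_all
  ultimately show ?thesis
    by simp
qed

lemma fw_path_obj_iso_cmp:
  assumes fp: "fw_path_obj C Fib We d Q r1 r2 P w q" and iso: "inverse_arrows C e e'"
    and de: "cd C d = dm C e"
  shows "fw_path_obj C Fib We (cmp C e d) Q r1 r2 P w q"
proof -
  note f = fw_path_objD[OF fp] and r = pullbackD[OF f(1)]
  have "dm C (cmp C e d) = dm C d"
    using r inverse_arrowsD[OF iso] de by simp
  then show ?thesis
    using fp pullback_iso_cmp[OF f(1) iso de] unfolding fw_path_obj_def by simp
qed

text \<open>The weak universal property, applied to the evaluation map itself, yields a fibrewise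
  homotopy and hence a fibrewise path object.\<close>

lemma has_fw_path_obj_weak_pi_type:
  assumes "weak_pi_type C Fib We f g Pi pi PB e1 e2 eps"
  shows "has_fw_path_obj C Fib We g"
proof -
  have "pi \<in> hom C Pi (cd C f)" "is_pullback C pi f PB e1 e2"
    "eps \<in> hom C PB (dm C g)" "cmp C g eps = e2"
    using assms unfolding weak_pi_type_def by auto
  then obtain u where "fw_htpy C Fib We g (cmp C eps u) eps"
    using assms unfolding weak_pi_type_def by blast
  then show ?thesis
    unfolding has_fw_path_obj_def by (elim fw_htpyE) blast
qed

end

locale path_cat =
  fixes C :: "('o, 'm) cat" and Fib We :: "'m set"
  assumes path_category: "path_category C Fib We"

sublocale path_cat \<subseteq> category
  using path_category unfolding path_category_def by unfold_locales blast

context path_cat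
begin

lemma Fib_arr: "f \<in> Fib \<Longrightarrow> f \<in> arr C"
  using path_category unfolding path_category_def by (meson subsetD)

lemma We_arr: "w \<in> We \<Longrightarrow> w \<in> arr C"
  using path_category unfolding path_category_def by (meson subsetD)

lemma isos_Fib: "f \<in> isos C \<Longrightarrow> f \<in> Fib"
  using path_category unfolding path_category_def by blast

lemma isos_We: "f \<in> isos C \<Longrightarrow> f \<in> We"
  using path_category unfolding path_category_def by blast

lemma Fib_cmp: "f \<in> Fib \<Longrightarrow> g \<in> Fib \<Longrightarrow> cd C f = dm C g \<Longrightarrow> cmp C g f \<in> Fib"
  using path_category unfolding path_category_def by blast

lemma We_cmp_iso:
  assumes w: "w \<in> We" and a: "a \<in> isos C" and aw: "cd C a = dm C w"
  shows "cmp C w a \<in> We"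
proof -
  obtain a' where iso: "inverse_arrows C a a'"
    using a by (rule isosE)
  note i = inverse_arrowsD[OF iso]
  have w_arr: "w \<in> arr C"
    using w by (rule We_arr)
  have "cmp C a' a \<in> We"
    using i isos_We idt_isos by simp
  moreover have "cmp C (cmp C w a) a' = w"
    using i w_arr aw by simp
  moreover have "two_out_of_six C We"
    using path_category unfolding path_category_def by blast
  ultimately show ?thesis
    using w w_arr i aw unfolding two_out_of_six_def by (metis cmp_arr cmp_dm)
qed

lemma has_fw_path_obj_iso:
  assumes "f \<in> isos C"
  shows "has_fw_path_obj C Fib We f"
proof -
  obtain f' where iso: "inverse_arrows C f f'"
    using assms by (rule isosE)
  note i = inverse_arrowsD[OF iso]
  have "is_pullback C f f (dm C f) (idt C (dm C f)) (idt C (dm C f))"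
    using pullback_of_iso[OF iso i(1) refl] i by simp
  moreover have "idt C (dm C f) \<in> isos C"
    using i by (simp add: idt_isos)
  ultimately have "fw_path_obj C Fib We f (dm C f) (idt C (dm C f)) (idt C (dm C f))
      (dm C f) (idt C (dm C f)) (idt C (dm C f))"
    unfolding fw_path_obj_def using i isos_We isos_Fib by (simp add: hom_def)
  then show ?thesis
    unfolding has_fw_path_obj_def by blast
qed

lemma fw_htpy_iso_cmp:
  assumes h: "fw_htpy C Fib We d m m'" and e: "e \<in> isos C" and de: "cd C d = dm C e"
  shows "fw_htpy C Fib We (cmp C e d) m m'"
proof -
  obtain e' where iso: "inverse_arrows C e e'"
    using e by (rule isosE)
  obtain Q r1 r2 P w q H where d: "d \<in> Fib" and fp: "fw_path_obj C Fib We d Q r1 r2 P w q"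
    and H: "H \<in> arr C" "dm C H = dm C m" "cd C H = P"
    and ends: "m = cmp C r1 (cmp C q H)" "m' = cmp C r2 (cmp C q H)"
    by (rule fw_htpyE[OF h])
  have "cmp C e d \<in> Fib"
    using Fib_cmp[OF d isos_Fib[OF e] de] .
  from fw_htpyI[OF this fw_path_obj_iso_cmp[OF fp iso de] H(1,3)] show ?thesis
    unfolding ends .
qed

lemma fw_path_obj_cmp_iso:
  assumes fp: "fw_path_obj C Fib We d Q r1 r2 P w q" and iso: "inverse_arrows C a a'"
    and ad: "cd C a = dm C d"
  shows "fw_path_obj C Fib We (cmp C d a) Q (cmp C a' r1) (cmp C a' r2) P (cmp C w a) q"
proof -
  note f = fw_path_objD[OF fp] and r = pullbackD[OF f(1)] and i = inverse_arrowsD[OF iso]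
  have "is_pullback C (cmp C d a) (cmp C d a) Q (cmp C a' r1) (cmp C a' r2)"
    using pullback_sym[OF pullback_cmp_iso[OF pullback_sym[OF pullback_cmp_iso[OF f(1) iso ad]] iso ad]] .
  moreover have "cmp C w a \<in> We"
    using We_cmp_iso[OF f(5) isosI[OF iso]] f ad by simp
  moreover have "cmp C (cmp C a' r) (cmp C q (cmp C w a)) = idt C (dm C a)"
    if "r \<in> arr C" "dm C r = Q" "cd C r = dm C d" "cmp C r (cmp C q w) = idt C (dm C d)" for r
  proof -
    have "cmp C (cmp C a' r) (cmp C q (cmp C w a)) = cmp C a' (cmp C (cmp C r (cmp C q w)) a)"
      using that(1-3) f(2-9) i ad by simp
    then show ?thesis
      using that(4) i ad by simp
  qed
  ultimately show ?thesis
    unfolding fw_path_obj_def using f r i ad by (simp add: hom_def)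
qed

lemma fw_htpy_cmp_iso:
  assumes h: "fw_htpy C Fib We d (cmp C a m) (cmp C a m')" and iso: "inverse_arrows C a a'"
    and ad: "cd C a = dm C d"
    and m: "m \<in> arr C" "cd C m = dm C a" "m' \<in> arr C" "cd C m' = dm C a"
  shows "fw_htpy C Fib We (cmp C d a) m m'"
proof -
  obtain Q r1 r2 P w q H where d: "d \<in> Fib" and fp: "fw_path_obj C Fib We d Q r1 r2 P w q"
    and H: "H \<in> arr C" "dm C H = dm C (cmp C a m)" "cd C H = P"
    and ends: "cmp C a m = cmp C r1 (cmp C q H)" "cmp C a m' = cmp C r2 (cmp C q H)"
    by (rule fw_htpyE[OF h])
  note f = fw_path_objD[OF fp] and r = pullbackD[OF f(1)] and i = inverse_arrowsD[OF iso]
  have "cmp C d a \<in> Fib"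
    using Fib_cmp[OF isos_Fib[OF isosI[OF iso]] d ad] .
  then have "fw_htpy C Fib We (cmp C d a) (cmp C (cmp C a' r1) (cmp C q H)) (cmp C (cmp C a' r2) (cmp C q H))"
    using fw_htpyI[OF _ fw_path_obj_cmp_iso[OF fp iso ad] H(1,3)] by blast
  moreover have "cmp C (cmp C a' r1) (cmp C q H) = cmp C a' (cmp C a m)"
    "cmp C (cmp C a' r2) (cmp C q H) = cmp C a' (cmp C a m')"
    unfolding ends using f r i H ad by simp_all
  ultimately show ?thesis
    using inverse_arrows_cancel_left[OF iso] m by simp
qed

lemma strong_pi_type_of_iso:
  assumes iso: "inverse_arrows C d d'" and e: "e \<in> Fib" and de: "cd C d = dm C e"
  shows "strong_pi_type C Fib We e d (cd C e) (idt C (cd C e)) (dm C e) e (idt C (dm C e)) d'"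
proof -
  note i = inverse_arrowsD[OF iso] and e_arr = Fib_arr[OF e]
  have d: "d \<in> Fib" "has_fw_path_obj C Fib We d"
    using isosI[OF iso] by (simp_all add: isos_Fib has_fw_path_obj_iso)
  have id_Fib: "idt C (cd C e) \<in> Fib" "has_fw_path_obj C Fib We (idt C (cd C e))"
    using idt_isos[of "cd C e"] e_arr by (simp_all add: isos_Fib has_fw_path_obj_iso)
  have pb: "is_pullback C (idt C (cd C e)) e (dm C e) e (idt C (dm C e))"
    using pullback_of_iso[OF inverse_arrows_idt[OF cd_obj[OF e_arr]] e_arr] e_arr by simp
  have lift: "\<exists>k \<in> hom C D (cd C e). cmp C (idt C (cd C e)) k = h \<and>
      (\<exists>u \<in> hom C DB (dm C e). cmp C e u = cmp C k q1 \<and> cmp C (idt C (dm C e)) u = q2 \<and>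
        fw_htpy C Fib We d (cmp C d' u) m)"
    if h: "h \<in> hom C D (cd C e)" and pbh: "is_pullback C h e DB q1 q2"
      and m: "m \<in> hom C DB (dm C d)" and q2: "cmp C d m = q2" for D h DB q1 q2 m
  proof (intro bexI conjI)
    have "cmp C d' q2 = m"
      using q2 m inverse_arrows_cancel_left[OF iso] by (auto simp: hom_def)
    then show "fw_htpy C Fib We d (cmp C d' q2) m"
      using fw_htpy_refl[OF d] m by (simp add: hom_def)
  qed (use h pullbackD[OF pbh] in \<open>auto simp: hom_def\<close>)
  have "weak_pi_type C Fib We e d (cd C e) (idt C (cd C e)) (dm C e) e (idt C (dm C e)) d'"
    unfolding weak_pi_type_def
    by (intro conjI allI impI lift) (use e d(1) de id_Fib(1) pb i e_arr in \<open>simp_all add: hom_def\<close>)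
  moreover have "fw_htpy C Fib We (idt C (cd C e)) k k'"
    if "k \<in> hom C D (cd C e)" "k' \<in> hom C D (cd C e)"
      "cmp C (idt C (cd C e)) k = cmp C (idt C (cd C e)) k'" for D k k'
    using that fw_htpy_refl[OF id_Fib, of k] e_arr by (simp add: hom_def)
  ultimately show ?thesis
    unfolding strong_pi_type_def by blast
qed

lemma weak_pi_type_along_iso:
  assumes iso: "inverse_arrows C e e'" and d: "d \<in> Fib" "has_fw_path_obj C Fib We d"
    and de: "cd C d = dm C e" and pb: "is_pullback C d e' P p1 p2" and p2: "p2 \<in> Fib"
  shows "weak_pi_type C Fib We e d P p2 P (idt C P) (cmp C e' p2) p1"
proof -
  note i = inverse_arrowsD[OF iso] and p = pullbackD[OF pb]
  obtain p1' where p1_iso: "inverse_arrows C p1 p1'"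
    using pullback_leg_iso[OF pb isosI[OF inverse_arrows_sym[OF iso]]] by (rule isosE)
  note p1' = inverse_arrowsD[OF p1_iso]
  have p2_eq: "cmp C e (cmp C d p1) = p2"
    using p i inverse_arrows_cancel_right[OF iso, of p2] by simp
  have lift: "\<exists>k \<in> hom C D P. cmp C p2 k = h \<and>
      (\<exists>u \<in> hom C DB P. cmp C (idt C P) u = cmp C k q1 \<and> cmp C (cmp C e' p2) u = q2 \<and>
        fw_htpy C Fib We d (cmp C p1 u) m)"
    if h: "h \<in> hom C D (cd C e)" and pbh: "is_pullback C h e DB q1 q2"
      and m: "m \<in> hom C DB (dm C d)" and q2: "cmp C d m = q2" for D h DB q1 q2 m
  proof -
    note q = pullbackD[OF pbh]
    obtain psi where q1_iso: "inverse_arrows C q1 psi"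
      using pullback_leg_iso[OF pbh isosI[OF iso]] by (rule isosE)
    note psi = inverse_arrowsD[OF q1_iso]
    define k where "k = cmp C p1' (cmp C m psi)"
    have k: "k \<in> arr C" "dm C k = D" "cd C k = P"
      unfolding k_def using h m q psi p p1' by (auto simp: hom_def)
    have p1_k: "cmp C p1 k = cmp C m psi"
      unfolding k_def using inverse_arrows_cancel_right[OF p1_iso] m q psi p by (simp add: hom_def)
    have "cmp C p2 k = cmp C e (cmp C d (cmp C m psi))"
      using p2_eq p1_k p k i de by (metis cmp_arr cmp_assoc cmp_cd cmp_dm)
    also have "\<dots> = cmp C e (cmp C q2 psi)"
      using q(1-9) m psi i de p(1) by (simp add: hom_def flip: q2)
    also have "\<dots> = cmp C (cmp C h q1) psi"
      using q m psi i de by (simp add: hom_def)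
    also have "\<dots> = h"
      using h q(1-9) psi by (simp add: hom_def)
    finally have p2_k: "cmp C p2 k = h" .
    have p1_u: "cmp C p1 (cmp C k q1) = m"
    proof -
      have "cmp C p1 (cmp C k q1) = cmp C (cmp C p1 k) q1"
        using k q p h by (simp add: hom_def)
      also have "\<dots> = m"
        unfolding p1_k using m q psi by (simp add: hom_def)
      finally show ?thesis .
    qed
    have "cmp C (cmp C e' p2) (cmp C k q1) = q2"
      using p1_u p k q q2 h by (simp add: hom_def flip: p(10))
    moreover have "fw_htpy C Fib We d m m"
      using fw_htpy_refl[OF d] m by (simp add: hom_def)
    moreover have "k \<in> hom C D P" "cmp C k q1 \<in> hom C DB P" "cmp C (idt C P) (cmp C k q1) = cmp C k q1"
      using k q h by (simp_all add: hom_def)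
    ultimately show ?thesis
      using p2_k p1_u by metis
  qed
  have "is_pullback C p2 e P (idt C P) (cmp C e' p2)"
    using pullback_sym[OF pullback_of_iso[OF iso p(7)]] p i by simp
  then show ?thesis
    unfolding weak_pi_type_def
    by (intro conjI allI impI lift) (use isos_Fib isosI[OF iso] d de p2 p i in \<open>simp_all add: hom_def\<close>)
qed

lemma strong_pi_type_along_iso:
  assumes iso: "inverse_arrows C e e'" and d: "d \<in> Fib" "has_fw_path_obj C Fib We d"
    and de: "cd C d = dm C e" and pb: "is_pullback C d e' P p1 p2" and p2: "p2 \<in> Fib"
  shows "strong_pi_type C Fib We e d P p2 P (idt C P) (cmp C e' p2) p1"
proof -
  note i = inverse_arrowsD[OF iso] and p = pullbackD[OF pb]
  obtain p1' where p1_iso: "inverse_arrows C p1 p1'"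
    using pullback_leg_iso[OF pb isosI[OF inverse_arrows_sym[OF iso]]] by (rule isosE)
  have p2_eq: "cmp C e (cmp C d p1) = p2"
    using p i inverse_arrows_cancel_right[OF iso, of p2] by simp
  have "fw_htpy C Fib We p2 k k'"
    if k: "k \<in> hom C D P" "k' \<in> hom C D P" and pbk: "is_pullback C (cmp C p2 k) e DB q1 q2"
      and u: "u \<in> hom C DB P" "cmp C (idt C P) u = cmp C k q1"
      and u': "u' \<in> hom C DB P" "cmp C (idt C P) u' = cmp C k' q1"
      and htpy: "fw_htpy C Fib We d (cmp C p1 u) (cmp C p1 u')" for D k k' DB q1 q2 u u'
  proof -
    note q = pullbackD[OF pbk]
    obtain psi where q1_iso: "inverse_arrows C q1 psi"
      using pullback_leg_iso[OF pbk isosI[OF iso]] by (rule isosE)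
    note psi = inverse_arrowsD[OF q1_iso]
    have k_arr: "k \<in> arr C" "dm C k = D" "cd C k = P" "k' \<in> arr C" "dm C k' = D" "cd C k' = P"
      using k by (simp_all add: hom_def)
    have uk: "u = cmp C k q1" "u' = cmp C k' q1"
      using u u' by (simp_all add: hom_def)
    have "fw_htpy C Fib We d (cmp C p1 k) (cmp C p1 k')"
      using fw_htpy_cmp_right[OF htpy, of psi] psi q p k_arr unfolding uk by simp
    then have "fw_htpy C Fib We (cmp C d p1) k k'"
      by (rule fw_htpy_cmp_iso[OF _ p1_iso]) (use p(5,6) k_arr in simp_all)
    then have "fw_htpy C Fib We (cmp C e (cmp C d p1)) k k'"
      by (rule fw_htpy_iso_cmp[OF _ isosI[OF iso]]) (use p(1,4,6) de in simp)
    then show ?thesis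
      unfolding p2_eq .
  qed
  then show ?thesis
    unfolding strong_pi_type_def using weak_pi_type_along_iso[OF assms] by blast
qed

end

locale display_maps = path_cat +
  fixes strong :: bool and Dm :: "'m set"
  assumes display_class: "display_class strong C Fib We Dm"
begin

lemma Dm_Fib: "d \<in> Dm \<Longrightarrow> d \<in> Fib"
  and idt_Dm: "X \<in> obj C \<Longrightarrow> idt C X \<in> Dm"
  and pullback_Dm: "d \<in> Dm \<Longrightarrow> h \<in> arr C \<Longrightarrow> cd C h = cd C d \<Longrightarrow>
    \<exists>P p1 p2. is_pullback C d h P p1 p2 \<and> p2 \<in> Dm"
  and pi_type_Dm: "d \<in> Dm \<Longrightarrow> e \<in> Dm \<Longrightarrow> cd C d = dm C e \<Longrightarrow>
    \<exists>Pi pi PB e1 e2 eps. pi_type strong C Fib We e d Pi pi PB e1 e2 eps \<and> pi \<in> Dm"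
  using display_class unfolding display_class_def by blast+

lemma has_fw_path_obj_Dm:
  assumes d: "d \<in> Dm"
  shows "has_fw_path_obj C Fib We d"
proof -
  have "idt C (cd C d) \<in> Dm"
    using idt_Dm Fib_arr[OF Dm_Fib[OF d]] by simp
  then obtain Pi pi PB e1 e2 eps where "pi_type strong C Fib We (idt C (cd C d)) d Pi pi PB e1 e2 eps"
    using pi_type_Dm[OF d] Fib_arr[OF Dm_Fib[OF d]] by fastforce
  then show ?thesis
    by (rule has_fw_path_obj_weak_pi_type[OF weak_pi_type_if_pi_type])
qed

lemma pullback_Dm_isos:
  assumes d: "d \<in> Dm \<union> isos C" and h: "h \<in> arr C" "cd C h = cd C d"
  shows "\<exists>P p1 p2. is_pullback C d h P p1 p2 \<and> p2 \<in> Dm \<union> isos C"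
proof (cases "d \<in> Dm")
  case True
  then show ?thesis
    using pullback_Dm h by blast
next
  case False
  then obtain d' where iso: "inverse_arrows C d d'"
    using d by (auto elim: isosE)
  have "idt C (dm C h) \<in> Dm"
    using idt_Dm h by simp
  then show ?thesis
    using pullback_of_iso[OF iso h] by blast
qed

lemma pi_type_Dm_isos:
  assumes d: "d \<in> Dm \<union> isos C" and e: "e \<in> Dm \<union> isos C" and de: "cd C d = dm C e"
  shows "\<exists>Pi pi PB e1 e2 eps. pi_type strong C Fib We e d Pi pi PB e1 e2 eps \<and> pi \<in> Dm \<union> isos C"
proof -
  have Fib: "d \<in> Fib" "e \<in> Fib"
    using d e Dm_Fib isos_Fib by blast+
  consider "d \<in> Dm" "e \<in> Dm" | "e \<in> isos C" | "d \<in> isos C" "e \<in> Dm"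
    using d e by blast
  then show ?thesis
  proof cases
    case 1
    then show ?thesis
      using pi_type_Dm de by blast
  next
    case 2
    then obtain e' where iso: "inverse_arrows C e e'"
      by (rule isosE)
    note i = inverse_arrowsD[OF iso]
    obtain P p1 p2 where pb: "is_pullback C d e' P p1 p2" and p2: "p2 \<in> Dm \<union> isos C"
      using pullback_Dm_isos[OF d i(2)] i de by auto
    have "has_fw_path_obj C Fib We d"
      using d has_fw_path_obj_Dm has_fw_path_obj_iso by blast
    moreover have "p2 \<in> Fib"
      using p2 Dm_Fib isos_Fib by blast
    ultimately have "pi_type strong C Fib We e d P p2 P (idt C P) (cmp C e' p2) p1"
      by (intro pi_type_if_strong_pi_type strong_pi_type_along_iso[OF iso Fib(1) _ de pb])
    then show ?thesis
      using p2 by blast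
  next
    case 3
    then obtain d' where iso: "inverse_arrows C d d'"
      by (auto elim: isosE)
    have "pi_type strong C Fib We e d (cd C e) (idt C (cd C e)) (dm C e) e (idt C (dm C e)) d'"
      using strong_pi_type_of_iso[OF iso Fib(2) de] by (rule pi_type_if_strong_pi_type)
    moreover have "idt C (cd C e) \<in> Dm"
      using idt_Dm Fib_arr[OF Fib(2)] by simp
    ultimately show ?thesis
      by blast
  qed
qed

end

theorem lemma6p3:
  fixes C :: "('o, 'm) cat" and Fib We Dm :: "'m set" and strong :: bool
  assumes "path_category C Fib We"
    and "display_class strong C Fib We Dm"
  shows "display_class strong C Fib We (Dm \<union> isos C)"
proof -
  interpret display_maps C Fib We strong Dm
    by unfold_locales (fact assms)+
  show ?thesis
    unfolding display_class_def
    using Dm_Fib isos_Fib idt_Dm pullback_Dm_isos pi_type_Dm_isos by blast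
qed

end
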